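(* The cut rule is admissible in the cut-free fragment of BIS4: for all bunches $\Delta$, bunched contexts $\Gamma(-)$ and formulas $\psi,\varphi$ of BIS4, if $\Delta\vdash_{\mathsf{cf}}\psi$ and $\Gamma(\psi)\vdash_{\mathsf{cf}}\varphi$, then $\Gamma(\Delta)\vdash_{\mathsf{cf}}\varphi$.
   Context: Formulas of BIS4: $\varphi,\psi ::= \top \mid \bot \mid \varphi\wedge\psi \mid \varphi\vee\psi \mid \varphi\to\psi \mid \mathsf{emp} \mid \varphi\ast\psi \mid \varphi -\!\!\ast\, \psi \mid \Box\varphi \mid a$, where $a$ ranges over a fixed set $\mathrm{Atom}$. Bunches are finite binary trees whose leaves are formulas or one of two empty bunches $\varnothing_m,\varnothing_a$, and whose internal nodes are labelled either by the multiplicative comma ($\Delta_1 \mathbin{,} \Delta_2$) or the additive semicolon ($\Delta_1 \mathbin{;} \Delta_2$). A bunched context $\Delta(-)$ is a bunch with exactly one leaf replaced by a hole; $\Delta(\Gamma)$ is the result of filling the hole with $\Gamma$. Bunch equivalence $\equiv$ is the least equivalence relation such that $\mathbin{,}$ is commutative and associative with unit $\varnothing_m$, $\mathbin{;}$ is commutative and associative with unit $\varnothing_a$, and $\Delta\equiv\Delta'$ implies $\Gamma(\Delta)\equiv\Gamma(\Delta')$. For a bunch $\Delta$, $\Box\Delta$ is the bunch obtained by replacing every formula leaf $\chi$ of $\Delta$ by $\Box\chi$ (empty bunches and node labels unchanged). The BIS4 sequent calculus has the rules: (ax) $a\vdash a$ for $a\in\mathrm{Atom}$; (equiv) from $\Delta'\vdash\varphi$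 and $\Delta\equiv\Delta'$ infer $\Delta\vdash\varphi$; (W;) from $\Delta(\Delta_1)\vdash\varphi$ infer $\Delta(\Delta_1\mathbin{;}\Delta_2)\vdash\varphi$; (C;) from $\Delta(\Delta_1\mathbin{;}\Delta_1)\vdash\varphi$ infer $\Delta(\Delta_1)\vdash\varphi$; (cut) from $\Delta'\vdash A$ and $\Delta(A)\vdash B$ infer $\Delta(\Delta')\vdash B$; (empR) $\varnothing_m\vdash\mathsf{emp}$; (empL) from $\Delta(\varnothing_m)\vdash\varphi$ infer $\Delta(\mathsf{emp})\vdash\varphi$; ($\ast$R) from $\Delta_1\vdash\varphi$, $\Delta_2\vdash\psi$ infer $\Delta_1\mathbin{,}\Delta_2\vdash\varphi\ast\psi$; ($\ast$L) from $\Delta(\varphi\mathbin{,}\psi)\vdash\chi$ infer $\Delta(\varphi\ast\psi)\vdash\chi$; ($-\!\ast$R) from $\Delta\mathbin{,}\varphi\vdash\psi$ infer $\Delta\vdash\varphi-\!\!\ast\,\psi$; ($-\!\ast$L) from $\Delta_1\vdash\varphi$ and $\Delta(\Delta_2\mathbin{,}\psi)\vdash\chi$ infer $\Delta((\Delta_1\mathbin{,}\Delta_2)\mathbin{,}(\varphi-\!\!\ast\,\psi))\vdash\chi$; ($\top$R) $\varnothing_a\vdash\top$; ($\top$L) from $\Delta(\varnothing_a)\vdash\varphi$ infer $\Delta(\top)\vdash\varphi$; ($\wedge$R) from $\Delta_1\vdash\varphi$, $\Delta_2\vdash\psi$ infer $\Delta_1\mathbin{;}\Delta_2\vdash\varphi\wedge\psi$;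 ($\wedge$L) from $\Delta(\varphi\mathbin{;}\psi)\vdash\chi$ infer $\Delta(\varphi\wedge\psi)\vdash\chi$; ($\to$R) from $\Delta\mathbin{;}\varphi\vdash\psi$ infer $\Delta\vdash\varphi\to\psi$; ($\to$L) from $\Delta_1\vdash\varphi$ and $\Delta(\Delta_2\mathbin{;}\psi)\vdash\chi$ infer $\Delta((\Delta_1\mathbin{;}\Delta_2)\mathbin{;}(\varphi\to\psi))\vdash\chi$; ($\bot$L) $\Delta(\bot)\vdash\varphi$; ($\vee$R1),($\vee$R2) from $\Delta\vdash\varphi$ (resp. $\Delta\vdash\psi$) infer $\Delta\vdash\varphi\vee\psi$; ($\vee$L) from $\Delta(\varphi)\vdash\chi$ and $\Delta(\psi)\vdash\chi$ infer $\Delta(\varphi\vee\psi)\vdash\chi$; ($\Box$R) from $\Box\Delta\vdash A$ infer $\Box\Delta\vdash\Box A$; ($\Box$L) from $\Delta(A)\vdash B$ infer $\Delta(\Box A)\vdash B$. $\Delta\vdash_{\mathsf{cf}}\varphi$ means $\Delta\vdash\varphi$ is derivable in BIS4 without the (cut) rule. *)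

theory Defs
  imports Main
begin

datatype 'a fm =
    Top | Bot | Conj "'a fm" "'a fm" | Disj "'a fm" "'a fm" | Imp "'a fm" "'a fm"
  | Emp | Star "'a fm" "'a fm" | Wand "'a fm" "'a fm" | Box "'a fm" | Atom 'a

datatype 'a bunch =
    Fm "'a fm" | EmpM | EmpA
  | Comma "'a bunch" "'a bunch" | Semi "'a bunch" "'a bunch"

datatype 'a ctx =
    Hole
  | CommaL "'a ctx" "'a bunch" | CommaR "'a bunch" "'a ctx"
  | SemiL "'a ctx" "'a bunch" | SemiR "'a bunch" "'a ctx"

primrec fill :: "'a ctx \<Rightarrow> 'a bunch \<Rightarrow> 'a bunch" where
  "fill Hole G = G"
| "fill (CommaL C B) G = Comma (fill C G) B"
| "fill (CommaR B C) G = Comma B (fill C G)"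
| "fill (SemiL C B) G = Semi (fill C G) B"
| "fill (SemiR B C) G = Semi B (fill C G)"

inductive beq :: "'a bunch \<Rightarrow> 'a bunch \<Rightarrow> bool" where
  refl: "beq D D"
| sym: "beq D D' \<Longrightarrow> beq D' D"
| trans: "beq D1 D2 \<Longrightarrow> beq D2 D3 \<Longrightarrow> beq D1 D3"
| comma_comm: "beq (Comma D1 D2) (Comma D2 D1)"
| comma_assoc: "beq (Comma D1 (Comma D2 D3)) (Comma (Comma D1 D2) D3)"
| comma_unit: "beq (Comma D EmpM) D"
| semi_comm: "beq (Semi D1 D2) (Semi D2 D1)"
| semi_assoc: "beq (Semi D1 (Semi D2 D3)) (Semi (Semi D1 D2) D3)"
| semi_unit: "beq (Semi D EmpA) D"
| cong: "beq D D' \<Longrightarrow> beq (fill C D) (fill C D')"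

primrec boxb :: "'a bunch \<Rightarrow> 'a bunch" where
  "boxb (Fm A) = Fm (Box A)"
| "boxb EmpM = EmpM"
| "boxb EmpA = EmpA"
| "boxb (Comma D1 D2) = Comma (boxb D1) (boxb D2)"
| "boxb (Semi D1 D2) = Semi (boxb D1) (boxb D2)"

inductive cf :: "'a bunch \<Rightarrow> 'a fm \<Rightarrow> bool" where
  ax: "cf (Fm (Atom a)) (Atom a)"
| equiv: "cf D' A \<Longrightarrow> beq D D' \<Longrightarrow> cf D A"
| weakSemi: "cf (fill C D1) A \<Longrightarrow> cf (fill C (Semi D1 D2)) A"
| contrSemi: "cf (fill C (Semi D1 D1)) A \<Longrightarrow> cf (fill C D1) A"
| empR: "cf EmpM Emp"
| empL: "cf (fill C EmpM) A \<Longrightarrow> cf (fill C (Fm Emp)) A"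
| starR: "cf D1 A \<Longrightarrow> cf D2 B \<Longrightarrow> cf (Comma D1 D2) (Star A B)"
| starL: "cf (fill C (Comma (Fm A) (Fm B))) X \<Longrightarrow> cf (fill C (Fm (Star A B))) X"
| wandR: "cf (Comma D (Fm A)) B \<Longrightarrow> cf D (Wand A B)"
| wandL: "cf D1 A \<Longrightarrow> cf (fill C (Comma D2 (Fm B))) X
          \<Longrightarrow> cf (fill C (Comma (Comma D1 D2) (Fm (Wand A B)))) X"
| topR: "cf EmpA Top"
| topL: "cf (fill C EmpA) A \<Longrightarrow> cf (fill C (Fm Top)) A"
| conjR: "cf D1 A \<Longrightarrow> cf D2 B \<Longrightarrow> cf (Semi D1 D2) (Conj A B)"
| conjL: "cf (fill C (Semi (Fm A) (Fm B))) X \<Longrightarrow> cf (fill C (Fm (Conj A B))) X"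
| impR: "cf (Semi D (Fm A)) B \<Longrightarrow> cf D (Imp A B)"
| impL: "cf D1 A \<Longrightarrow> cf (fill C (Semi D2 (Fm B))) X
          \<Longrightarrow> cf (fill C (Semi (Semi D1 D2) (Fm (Imp A B)))) X"
| botL: "cf (fill C (Fm Bot)) A"
| disjR1: "cf D A \<Longrightarrow> cf D (Disj A B)"
| disjR2: "cf D B \<Longrightarrow> cf D (Disj A B)"
| disjL: "cf (fill C (Fm A)) X \<Longrightarrow> cf (fill C (Fm B)) X \<Longrightarrow> cf (fill C (Fm (Disj A B))) X"
| boxR: "cf (boxb D) A \<Longrightarrow> cf (boxb D) (Box A)"
| boxL: "cf (fill C (Fm A)) B \<Longrightarrow> cf (fill C (Fm (Box A))) B"

end

theory Submission
  imports Defs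
begin

text \<open>Cut is eliminated by a double induction: on the size of the cut formula \<open>\<psi>\<close> and, inside
  it, on the derivation of the left premise \<open>D \<turnstile> \<psi>\<close>. If that derivation ends with a structural
  or left rule, the cut moves up into its premises. If it ends with the right rule for \<open>\<psi>\<close>, we
  induct on the derivation of the right premise, replacing an arbitrary set of occurrences of
  \<open>\<psi>\<close> by \<open>D\<close> at once, so that contraction needs no special treatment. A left rule acting on a
  replaced occurrence is a principal cut, which reduces to cuts on the immediate subformulas of
  \<open>\<psi>\<close>. The right rule for \<open>\<box>\<close> needs a boxed antecedent; it survives the replacement because
  a \<open>D\<close> derived by that rule is itself boxed.\<close>

primrec ctx_comp :: "'a ctx \<Rightarrow> 'a ctx \<Rightarrow> 'a ctx" where
  "ctx_comp Hole E = E"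
| "ctx_comp (CommaL C B) E = CommaL (ctx_comp C E) B"
| "ctx_comp (CommaR B C) E = CommaR B (ctx_comp C E)"
| "ctx_comp (SemiL C B) E = SemiL (ctx_comp C E) B"
| "ctx_comp (SemiR B C) E = SemiR B (ctx_comp C E)"

lemma fill_ctx_comp [simp]: "fill (ctx_comp C E) X = fill C (fill E X)"
  by (induction C) auto

section \<open>Substituting a bunch for occurrences of a formula\<close>

inductive subst_occs :: "'a fm \<Rightarrow> 'a bunch \<Rightarrow> 'a bunch \<Rightarrow> 'a bunch \<Rightarrow> bool"
  for p :: "'a fm" and D :: "'a bunch" where
  here: "subst_occs p D (Fm p) D"
| keep: "subst_occs p D X X"
| comma: "subst_occs p D X1 Y1 \<Longrightarrow> subst_occs p D X2 Y2 \<Longrightarrow> subst_occs p D (Comma X1 X2) (Comma Y1 Y2)"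
| semi: "subst_occs p D X1 Y1 \<Longrightarrow> subst_occs p D X2 Y2 \<Longrightarrow> subst_occs p D (Semi X1 X2) (Semi Y1 Y2)"

lemma subst_occs_Fm_iff [simp]: "subst_occs p D (Fm q) Y \<longleftrightarrow> Y = Fm q \<or> (q = p \<and> Y = D)"
  by (auto elim: subst_occs.cases intro: subst_occs.intros)

lemma subst_occs_EmpM_iff [simp]: "subst_occs p D EmpM Y \<longleftrightarrow> Y = EmpM"
  by (auto elim: subst_occs.cases intro: subst_occs.intros)

lemma subst_occs_EmpA_iff [simp]: "subst_occs p D EmpA Y \<longleftrightarrow> Y = EmpA"
  by (auto elim: subst_occs.cases intro: subst_occs.intros)

lemma subst_occs_Comma_iff [simp]:
  "subst_occs p D (Comma X1 X2) Y \<longleftrightarrow> (\<exists>Y1 Y2. Y = Comma Y1 Y2 \<and> subst_occs p D X1 Y1 \<and> subst_occs p D X2 Y2)"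
  by (blast elim: subst_occs.cases intro: subst_occs.intros)

lemma subst_occs_Semi_iff [simp]:
  "subst_occs p D (Semi X1 X2) Y \<longleftrightarrow> (\<exists>Y1 Y2. Y = Semi Y1 Y2 \<and> subst_occs p D X1 Y1 \<and> subst_occs p D X2 Y2)"
  by (blast elim: subst_occs.cases intro: subst_occs.intros)

lemma subst_occs_fill: "subst_occs p D X Y \<Longrightarrow> subst_occs p D (fill C X) (fill C Y)"
  by (induction C) (auto intro: subst_occs.keep)

definition subst_occs_ctx :: "'a fm \<Rightarrow> 'a bunch \<Rightarrow> 'a ctx \<Rightarrow> 'a ctx \<Rightarrow> bool" where
  "subst_occs_ctx p D C C' \<longleftrightarrow>
     (\<forall>X Y. subst_occs p D X Y \<longrightarrow> subst_occs p D (fill C X) (fill C' Y))"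

lemma subst_occs_ctxD: "subst_occs_ctx p D C C' \<Longrightarrow> subst_occs p D X Y \<Longrightarrow> subst_occs p D (fill C X) (fill C' Y)"
  unfolding subst_occs_ctx_def by blast

lemma subst_occs_fill_decompose:
  assumes "subst_occs p D (fill C X) Y"
  obtains C' Y' where "Y = fill C' Y'" and "subst_occs p D X Y'" and "subst_occs_ctx p D C C'"
proof -
  from assms have "\<exists>C' Y'. Y = fill C' Y' \<and> subst_occs p D X Y' \<and> subst_occs_ctx p D C C'"
    by (induction C arbitrary: Y) (simp add: subst_occs_ctx_def; metis fill.simps)+
  then show thesis using that by blast
qed

lemma subst_occs_boxb:
  assumes "subst_occs p D (boxb X) Y" and "\<And>A. p = Box A \<Longrightarrow> \<exists>F. D = boxb F"
  shows "\<exists>X'. Y = boxb X'"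
  using assms(1)
proof (induction X arbitrary: Y)
  case (Fm A)
  then show ?case using assms(2) by (auto intro: boxb.simps(1)[symmetric])
next
  case (Comma X1 X2)
  then show ?case by (metis boxb.simps(4) subst_occs_Comma_iff)
next
  case (Semi X1 X2)
  then show ?case by (metis boxb.simps(5) subst_occs_Semi_iff)
qed (auto intro: boxb.simps(2,3)[symmetric])

lemma beq_subst_occs:
  assumes "beq X X'"
  shows "(subst_occs p D X Y \<longrightarrow> (\<exists>Y'. subst_occs p D X' Y' \<and> beq Y Y'))
       \<and> (subst_occs p D X' Y \<longrightarrow> (\<exists>Y'. subst_occs p D X Y' \<and> beq Y' Y))"
  using assms
proof (induction arbitrary: Y rule: beq.induct)
  case (trans X1 X2 X3)
  then show ?case by (meson beq.trans)
next
  case (cong X X' C)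
  show ?case
  proof (intro conjI impI)
    assume "subst_occs p D (fill C X) Y"
    then obtain C' Y0 where "Y = fill C' Y0" "subst_occs p D X Y0" "subst_occs_ctx p D C C'"
      by (erule subst_occs_fill_decompose)
    with cong.IH show "\<exists>Y'. subst_occs p D (fill C X') Y' \<and> beq Y Y'"
      by (meson beq.cong subst_occs_ctxD)
  next
    assume "subst_occs p D (fill C X') Y"
    then obtain C' Y0 where "Y = fill C' Y0" "subst_occs p D X' Y0" "subst_occs_ctx p D C C'"
      by (erule subst_occs_fill_decompose)
    with cong.IH show "\<exists>Y'. subst_occs p D (fill C X) Y' \<and> beq Y' Y"
      by (meson beq.cong subst_occs_ctxD)
  qed
qed (fastforce intro: beq.intros)+

definition replaceable_by :: "'a bunch \<Rightarrow> 'a bunch \<Rightarrow> bool" where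
  "replaceable_by X Y \<longleftrightarrow> (\<forall>C \<phi>. cf (fill C X) \<phi> \<longrightarrow> cf (fill C Y) \<phi>)"

lemma replaceable_byI: "(\<And>C \<phi>. cf (fill C X) \<phi> \<Longrightarrow> cf (fill C Y) \<phi>) \<Longrightarrow> replaceable_by X Y"
  unfolding replaceable_by_def by blast

lemma replaceable_byD: "replaceable_by X Y \<Longrightarrow> cf (fill C X) \<phi> \<Longrightarrow> cf (fill C Y) \<phi>"
  unfolding replaceable_by_def by blast

lemma replaceable_by_refl [simp]: "replaceable_by X X"
  unfolding replaceable_by_def by blast

lemma replaceable_by_trans [trans]:
  "replaceable_by X Y \<Longrightarrow> replaceable_by Y Z \<Longrightarrow> replaceable_by X Z"
  unfolding replaceable_by_def by blast

lemma replaceable_by_fill: "replaceable_by X Y \<Longrightarrow> replaceable_by (fill E X) (fill E Y)"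
  unfolding replaceable_by_def by (metis fill_ctx_comp)

lemma replaceable_by_under_rule:
  assumes "replaceable_by A (fill C X)" and "\<And>C' \<phi>. cf (fill C' X) \<phi> \<Longrightarrow> cf (fill C' Y) \<phi>"
  shows "replaceable_by A (fill C Y)"
  using assms(1) replaceable_by_fill[OF replaceable_byI[OF assms(2)]] by (rule replaceable_by_trans)

lemma replaceable_by_Comma:
  assumes "replaceable_by X1 Y1" and "replaceable_by X2 Y2"
  shows "replaceable_by (Comma X1 X2) (Comma Y1 Y2)"
proof -
  have "replaceable_by (Comma X1 X2) (Comma Y1 X2)"
    using replaceable_by_fill[OF assms(1), of "CommaL Hole X2"] by simp
  also have "replaceable_by \<dots> (Comma Y1 Y2)"
    using replaceable_by_fill[OF assms(2), of "CommaR Y1 Hole"] by simp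
  finally show ?thesis .
qed

lemma replaceable_by_Semi:
  assumes "replaceable_by X1 Y1" and "replaceable_by X2 Y2"
  shows "replaceable_by (Semi X1 X2) (Semi Y1 Y2)"
proof -
  have "replaceable_by (Semi X1 X2) (Semi Y1 X2)"
    using replaceable_by_fill[OF assms(1), of "SemiL Hole X2"] by simp
  also have "replaceable_by \<dots> (Semi Y1 Y2)"
    using replaceable_by_fill[OF assms(2), of "SemiR Y1 Hole"] by simp
  finally show ?thesis .
qed

lemma beq_replaceable_by: "beq X Y \<Longrightarrow> replaceable_by X Y"
  by (rule replaceable_byI) (meson beq.cong beq.sym cf.equiv)

text \<open>What a derivation of \<open>D \<turnstile> \<psi>\<close> ending in the right rule for \<open>\<psi>\<close> provides: \<open>D\<close> may take
  the place of \<open>\<psi>\<close> in the conclusion of the matching left rule.\<close>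

definition principal_cuts :: "'a fm \<Rightarrow> 'a bunch \<Rightarrow> bool" where
  "principal_cuts \<psi> D \<longleftrightarrow> (case \<psi> of
      Top \<Rightarrow> replaceable_by EmpA D
    | Bot \<Rightarrow> (\<forall>C \<phi>. cf (fill C D) \<phi>)
    | Conj A B \<Rightarrow> replaceable_by (Semi (Fm A) (Fm B)) D
    | Disj A B \<Rightarrow> replaceable_by (Fm A) D \<or> replaceable_by (Fm B) D
    | Imp A B \<Rightarrow> (\<forall>E1 E2. cf E1 A \<longrightarrow> replaceable_by (Semi E2 (Fm B)) (Semi (Semi E1 E2) D))
    | Emp \<Rightarrow> replaceable_by EmpM D
    | Star A B \<Rightarrow> replaceable_by (Comma (Fm A) (Fm B)) D
    | Wand A B \<Rightarrow> (\<forall>E1 E2. cf E1 A \<longrightarrow> replaceable_by (Comma E2 (Fm B)) (Comma (Comma E1 E2) D))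
    | Box A \<Rightarrow> (\<exists>F. D = boxb F) \<and> replaceable_by (Fm A) D
    | Atom a \<Rightarrow> True)"

lemma subst_occs_left_rule:
  assumes "subst_occs p D (fill C (Fm F)) Y"
    and premise: "\<And>Y. subst_occs p D (fill C P) Y \<Longrightarrow> cf Y \<phi>"
    and rule: "replaceable_by P (Fm F)"
    and principal: "F = p \<Longrightarrow> replaceable_by P D"
  shows "cf Y \<phi>"
proof -
  obtain C' Y0 where Y: "Y = fill C' Y0" and Y0: "Y0 = Fm F \<or> (F = p \<and> Y0 = D)"
    and C': "subst_occs_ctx p D C C'"
    using assms(1) by (auto elim: subst_occs_fill_decompose)
  have "cf (fill C' P) \<phi>" by (rule premise[OF subst_occs_ctxD[OF C' subst_occs.keep]])
  then show ?thesis using Y Y0 rule principal by (auto dest: replaceable_byD)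
qed

lemma cf_subst_occs:
  assumes "cf X \<phi>" and "subst_occs \<psi> D X Y" and "cf D \<psi>" and "principal_cuts \<psi> D"
  shows "cf Y \<phi>"
  using assms(1,2)
proof (induction arbitrary: Y rule: cf.induct)
  case ax
  then show ?case using assms(3) by (auto intro: cf.ax)
next
  case equiv
  then show ?case by (meson beq_subst_occs cf.equiv)
next
  case (weakSemi C0 D1 A D2)
  obtain C' E1 E2 where "Y = fill C' (Semi E1 E2)" "subst_occs \<psi> D D1 E1"
    and "subst_occs_ctx \<psi> D C0 C'"
    using weakSemi.prems by (elim subst_occs_fill_decompose) fastforce
  then show ?case using weakSemi.IH cf.weakSemi subst_occs_ctxD by blast
next
  case (contrSemi C0 D1 A)
  then obtain C' E where "Y = fill C' E" "subst_occs \<psi> D D1 E"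
    and "subst_occs_ctx \<psi> D C0 C'"
    by (auto elim: subst_occs_fill_decompose)
  then show ?case using contrSemi.IH cf.contrSemi by (meson subst_occs.semi subst_occs_ctxD)
next
  case empR
  then show ?case by (simp add: cf.empR)
next
  case empL
  show ?case
    by (rule subst_occs_left_rule[OF empL.prems empL.IH])
      (use assms(4) in \<open>auto simp: principal_cuts_def intro: replaceable_byI cf.empL\<close>)
next
  case starR
  then show ?case by (auto intro: cf.starR)
next
  case starL
  show ?case
    by (rule subst_occs_left_rule[OF starL.prems starL.IH])
      (use assms(4) in \<open>auto simp: principal_cuts_def intro: replaceable_byI cf.starL\<close>)
next
  case wandR
  then show ?case by (auto intro: cf.wandR subst_occs.comma subst_occs.keep)
next
  case (wandL D1 A C0 D2 B X)
  then obtain C' E1 E2 Z where Y: "Y = fill C' (Comma (Comma E1 E2) Z)"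
    and E: "subst_occs \<psi> D D1 E1" "subst_occs \<psi> D D2 E2"
    and Z: "Z = Fm (Wand A B) \<or> (Wand A B = \<psi> \<and> Z = D)"
    and C': "subst_occs_ctx \<psi> D C0 C'"
    by (auto elim!: subst_occs_fill_decompose)
  have "cf E1 A" using wandL.IH(1) E(1) .
  moreover have "cf (fill C' (Comma E2 (Fm B))) X"
    using wandL.IH(2) C' E(2) by (meson subst_occs.comma subst_occs.keep subst_occs_ctxD)
  ultimately show ?case
    using Y Z assms(4) by (auto simp: principal_cuts_def replaceable_by_def intro: cf.wandL)
next
  case topR
  then show ?case by (simp add: cf.topR)
next
  case topL
  show ?case
    by (rule subst_occs_left_rule[OF topL.prems topL.IH])
      (use assms(4) in \<open>auto simp: principal_cuts_def intro: replaceable_byI cf.topL\<close>)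
next
  case conjR
  then show ?case by (auto intro: cf.conjR)
next
  case conjL
  show ?case
    by (rule subst_occs_left_rule[OF conjL.prems conjL.IH])
      (use assms(4) in \<open>auto simp: principal_cuts_def intro: replaceable_byI cf.conjL\<close>)
next
  case impR
  then show ?case by (auto intro: cf.impR subst_occs.semi subst_occs.keep)
next
  case (impL D1 A C0 D2 B X)
  then obtain C' E1 E2 Z where Y: "Y = fill C' (Semi (Semi E1 E2) Z)"
    and E: "subst_occs \<psi> D D1 E1" "subst_occs \<psi> D D2 E2"
    and Z: "Z = Fm (Imp A B) \<or> (Imp A B = \<psi> \<and> Z = D)"
    and C': "subst_occs_ctx \<psi> D C0 C'"
    by (auto elim!: subst_occs_fill_decompose)
  have "cf E1 A" using impL.IH(1) E(1) .
  moreover have "cf (fill C' (Semi E2 (Fm B))) X"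
    using impL.IH(2) C' E(2) by (meson subst_occs.semi subst_occs.keep subst_occs_ctxD)
  ultimately show ?case
    using Y Z assms(4) by (auto simp: principal_cuts_def replaceable_by_def intro: cf.impL)
next
  case botL
  then obtain C' Z where "Y = fill C' Z" "Z = Fm Bot \<or> (Bot = \<psi> \<and> Z = D)"
    by (auto elim: subst_occs_fill_decompose)
  then show ?case using assms(4) by (auto simp: principal_cuts_def intro: cf.botL)
next
  case disjR1
  then show ?case by (auto intro: cf.disjR1)
next
  case disjR2
  then show ?case by (auto intro: cf.disjR2)
next
  case (disjL C0 A X B)
  then obtain C' Z where Y: "Y = fill C' Z" and Z: "Z = Fm (Disj A B) \<or> (Disj A B = \<psi> \<and> Z = D)"
    and C': "subst_occs_ctx \<psi> D C0 C'"
    by (auto elim!: subst_occs_fill_decompose)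
  have "cf (fill C' (Fm A)) X" and "cf (fill C' (Fm B)) X"
    using disjL.IH subst_occs_ctxD[OF C' subst_occs.keep] by blast+
  then show ?case
    using Y Z assms(4) by (auto simp: principal_cuts_def intro: cf.disjL dest: replaceable_byD)
next
  case boxR
  have "\<exists>F. D = boxb F" if "\<psi> = Box \<chi>" for \<chi>
    using assms(4) that by (simp add: principal_cuts_def)
  then obtain D0' where "Y = boxb D0'"
    using subst_occs_boxb[OF boxR.prems] by blast
  then show ?case using boxR.IH boxR.prems cf.boxR by blast
next
  case boxL
  show ?case
    by (rule subst_occs_left_rule[OF boxL.prems boxL.IH])
      (use assms(4) in \<open>auto simp: principal_cuts_def intro: replaceable_byI cf.boxL\<close>)
qed

lemma replaceable_by_if_principal_cuts:
  "cf D \<psi> \<Longrightarrow> principal_cuts \<psi> D \<Longrightarrow> replaceable_by (Fm \<psi>) D"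
  by (rule replaceable_byI) (erule cf_subst_occs, simp_all add: subst_occs_fill subst_occs.here)

definition cut_admissible :: "'a fm \<Rightarrow> bool" where
  "cut_admissible \<psi> \<longleftrightarrow> (\<forall>D. cf D \<psi> \<longrightarrow> replaceable_by (Fm \<psi>) D)"

lemma cut_admissibleD: "cut_admissible \<psi> \<Longrightarrow> cf D \<psi> \<Longrightarrow> replaceable_by (Fm \<psi>) D"
  unfolding cut_admissible_def by blast

lemma principal_cuts_Star:
  "cut_admissible A \<Longrightarrow> cut_admissible B \<Longrightarrow> cf D1 A \<Longrightarrow> cf D2 B
    \<Longrightarrow> principal_cuts (Star A B) (Comma D1 D2)"
  by (simp add: principal_cuts_def cut_admissibleD replaceable_by_Comma)

lemma principal_cuts_Conj:
  "cut_admissible A \<Longrightarrow> cut_admissible B \<Longrightarrow> cf D1 A \<Longrightarrow> cf D2 B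
    \<Longrightarrow> principal_cuts (Conj A B) (Semi D1 D2)"
  by (simp add: principal_cuts_def cut_admissibleD replaceable_by_Semi)

lemma principal_cuts_Disj1: "cut_admissible A \<Longrightarrow> cf D A \<Longrightarrow> principal_cuts (Disj A B) D"
  by (simp add: principal_cuts_def cut_admissibleD)

lemma principal_cuts_Disj2: "cut_admissible B \<Longrightarrow> cf D B \<Longrightarrow> principal_cuts (Disj A B) D"
  by (simp add: principal_cuts_def cut_admissibleD)

lemma principal_cuts_Box: "cut_admissible A \<Longrightarrow> cf (boxb D) A \<Longrightarrow> principal_cuts (Box A) (boxb D)"
  by (auto simp: principal_cuts_def cut_admissibleD)

lemma principal_cuts_Wand:
  assumes "cut_admissible A" and "cut_admissible B" and "cf (Comma D (Fm A)) B"
  shows "principal_cuts (Wand A B) D"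
  unfolding principal_cuts_def fm.case
proof (intro allI impI)
  fix E1 E2 assume "cf E1 A"
  have "replaceable_by (Comma E2 (Fm B)) (Comma E2 (Comma D (Fm A)))"
    using assms(2,3) by (simp add: cut_admissibleD replaceable_by_Comma)
  also have "replaceable_by \<dots> (Comma E2 (Comma D E1))"
    using assms(1) \<open>cf E1 A\<close> by (simp add: cut_admissibleD replaceable_by_Comma)
  also have "replaceable_by \<dots> (Comma (Comma E1 E2) D)"
    by (rule beq_replaceable_by) (meson beq.comma_assoc beq.comma_comm beq.trans)
  finally show "replaceable_by (Comma E2 (Fm B)) (Comma (Comma E1 E2) D)" .
qed

lemma principal_cuts_Imp:
  assumes "cut_admissible A" and "cut_admissible B" and "cf (Semi D (Fm A)) B"
  shows "principal_cuts (Imp A B) D"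
  unfolding principal_cuts_def fm.case
proof (intro allI impI)
  fix E1 E2 assume "cf E1 A"
  have "replaceable_by (Semi E2 (Fm B)) (Semi E2 (Semi D (Fm A)))"
    using assms(2,3) by (simp add: cut_admissibleD replaceable_by_Semi)
  also have "replaceable_by \<dots> (Semi E2 (Semi D E1))"
    using assms(1) \<open>cf E1 A\<close> by (simp add: cut_admissibleD replaceable_by_Semi)
  also have "replaceable_by \<dots> (Semi (Semi E1 E2) D)"
    by (rule beq_replaceable_by) (meson beq.semi_assoc beq.semi_comm beq.trans)
  finally show "replaceable_by (Semi E2 (Fm B)) (Semi (Semi E1 E2) D)" .
qed

lemma cf_imp_replaceable_by:
  fixes \<psi> :: "'a fm"
  assumes "cf D \<psi>" and "\<And>\<chi> :: 'a fm. size \<chi> < size \<psi> \<Longrightarrow> cut_admissible \<chi>"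
  shows "replaceable_by (Fm \<psi>) D"
  using assms
proof (induction rule: cf.induct)
  case ax
  then show ?case by simp
next
  case equiv
  then show ?case by (meson beq.sym beq_replaceable_by replaceable_by_trans)
next
  case weakSemi
  then show ?case by (blast intro: replaceable_by_under_rule cf.weakSemi)
next
  case contrSemi
  then show ?case by (blast intro: replaceable_by_under_rule cf.contrSemi)
next
  case empR
  show ?case by (simp add: replaceable_by_if_principal_cuts cf.empR principal_cuts_def)
next
  case empL
  then show ?case by (blast intro: replaceable_by_under_rule cf.empL)
next
  case starR
  then show ?case by (simp add: replaceable_by_if_principal_cuts cf.starR principal_cuts_Star)
next
  case starL
  then show ?case by (blast intro: replaceable_by_under_rule cf.starL)
next
  case wandR
  then show ?case by (simp add: replaceable_by_if_principal_cuts cf.wandR principal_cuts_Wand)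
next
  case wandL
  then show ?case by (blast intro: replaceable_by_under_rule cf.wandL)
next
  case topR
  show ?case by (simp add: replaceable_by_if_principal_cuts cf.topR principal_cuts_def)
next
  case topL
  then show ?case by (blast intro: replaceable_by_under_rule cf.topL)
next
  case conjR
  then show ?case by (simp add: replaceable_by_if_principal_cuts cf.conjR principal_cuts_Conj)
next
  case conjL
  then show ?case by (blast intro: replaceable_by_under_rule cf.conjL)
next
  case impR
  then show ?case by (simp add: replaceable_by_if_principal_cuts cf.impR principal_cuts_Imp)
next
  case impL
  then show ?case by (blast intro: replaceable_by_under_rule cf.impL)
next
  case botL
  show ?case by (rule replaceable_byI) (metis fill_ctx_comp cf.botL)
next
  case disjR1
  then show ?case by (simp add: replaceable_by_if_principal_cuts cf.disjR1 principal_cuts_Disj1)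
next
  case disjR2
  then show ?case by (simp add: replaceable_by_if_principal_cuts cf.disjR2 principal_cuts_Disj2)
next
  case (disjL C A X B)
  then show ?case unfolding replaceable_by_def by (metis fill_ctx_comp cf.disjL)
next
  case boxR
  then show ?case by (simp add: replaceable_by_if_principal_cuts cf.boxR principal_cuts_Box)
next
  case boxL
  then show ?case by (blast intro: replaceable_by_under_rule cf.boxL)
qed

lemma cut_admissible_all: "cut_admissible \<psi>"
proof (induction \<psi> rule: measure_induct_rule[of size])
  case (less \<psi>)
  show ?case unfolding cut_admissible_def using cf_imp_replaceable_by less by blast
qed

theorem theorem8p6:
  fixes D :: "'a bunch" and C :: "'a ctx" and psi phi :: "'a fm"
  assumes "cf D psi" and "cf (fill C (Fm psi)) phi"
  shows "cf (fill C D) phi"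
  using cut_admissibleD[OF cut_admissible_all assms(1)] assms(2) by (rule replaceable_byD)

end
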